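(* If $E\subseteq\mathbb{R}$ is a non-empty weakly nowhere dense $G_\delta$ set, then there exist points $x\in E$ which are neither left density points nor right density points of $E$.
   Context: $|A|$ denotes Lebesgue measure. A set $E\subseteq\mathbb{R}$ is weakly nowhere dense if for every (nondegenerate) interval $J$ the set $E\cap J$ does not have full measure in $J$. A point $x$ is a left (resp. right) density point of $E$ if for every sequence of intervals $I_n=[x-r_n,x]$ (resp. $I_n=[x,x+r_n]$) with $r_n\searrow0$ we have $|E\cap I_n|/|I_n|\to1$. *)

theory Defs
  imports "HOL-Analysis.Analysis"
begin

text \<open>It suffices (and is equivalent) to range over compact
  nondegenerate intervals [a,b]; "full measure" is |E \<inter> J| = |J|.\<close>
definition weakly_nowhere_dense :: "real set \<Rightarrow> bool" where
  "weakly_nowhere_dense E \<longleftrightarrow>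
     (\<forall>a b. a < b \<longrightarrow> measure lebesgue (E \<inter> {a..b}) \<noteq> measure lebesgue {a..b})"

definition left_density_point :: "real set \<Rightarrow> real \<Rightarrow> bool" where
  "left_density_point E x \<longleftrightarrow>
     (\<forall>r :: nat \<Rightarrow> real. (\<forall>n. r n > 0) \<and> decseq r \<and> r \<longlonglongrightarrow> 0 \<longrightarrow>
        (\<lambda>n. measure lebesgue (E \<inter> {x - r n..x}) / measure lebesgue {x - r n..x}) \<longlonglongrightarrow> 1)"

definition right_density_point :: "real set \<Rightarrow> real \<Rightarrow> bool" where
  "right_density_point E x \<longleftrightarrow>
     (\<forall>r :: nat \<Rightarrow> real. (\<forall>n. r n > 0) \<and> decseq r \<and> r \<longlonglongrightarrow> 0 \<longrightarrow>
        (\<lambda>n. measure lebesgue (E \<inter> {x..x + r n}) / measure lebesgue {x..x + r n}) \<longlonglongrightarrow> 1)"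

end

theory Submission
  imports Defs
begin

text \<open>Applying a weak form of the Lebesgue density theorem to the complement of \<open>E\<close>, which
  has positive measure in every interval, one finds next to every point of \<open>E\<close> a point
  \<open>y \<in> E\<close> and an arbitrarily short interval \<open>[y - s, y]\<close> in which \<open>E\<close> has density below
  \<open>1/2\<close>. For each bound on \<open>s\<close> these points form an open set that is dense in \<open>E\<close>, and
  the same holds on the right by reflection. Since \<open>E\<close> is a \<open>G\<^sub>\<delta>\<close> set, Baire's theorem
  gives a point of \<open>E\<close> lying in all of these sets; there neither one-sided density of \<open>E\<close>
  tends to \<open>1\<close>.\<close>

subsection \<open>Reflection\<close>

lemma emeasure_lebesgue_reflect:
  fixes A :: "real set"
  assumes "A \<in> sets lebesgue"
  shows "emeasure lebesgue (uminus ` A) = emeasure lebesgue A"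
proof -
  have "lebesgue = distr lebesgue lebesgue (\<lambda>x::real. 0 + -1 * x)"
    using lebesgue_real_affine[of "-1" 0] by (simp add: density_1)
  then have "emeasure lebesgue A = emeasure (distr lebesgue lebesgue (\<lambda>x::real. 0 + -1 * x)) A"
    by simp
  also have "\<dots> = emeasure lebesgue (uminus ` A)"
    using assms lebesgue_affine_measurable[where c = "\<lambda>x::real. -1" and t = 0]
    by (subst emeasure_distr) (auto simp: minus_image_eq_vimage)
  finally show ?thesis ..
qed

lemma sets_lebesgue_reflect:
  fixes A :: "real set"
  assumes "A \<in> sets lebesgue"
  shows "uminus ` A \<in> sets lebesgue"
proof -
  have "uminus \<in> lebesgue \<rightarrow>\<^sub>M (lebesgue :: real measure)"
    using lebesgue_affine_measurable[where c = "\<lambda>x::real. -1" and t = 0] by simp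
  from measurable_sets[OF this assms] show ?thesis
    by (simp add: minus_image_eq_vimage)
qed

lemma measure_lebesgue_reflect: "measure lebesgue (uminus ` A) = measure lebesgue (A :: real set)"
proof (cases "A \<in> sets lebesgue")
  case True
  then show ?thesis by (simp add: measure_def emeasure_lebesgue_reflect)
next
  case False
  then have "uminus ` A \<notin> sets lebesgue"
    using sets_lebesgue_reflect[of "uminus ` A"] by (auto simp: image_image)
  with False show ?thesis by (simp add: measure_notin_sets)
qed

lemma measure_reflect_Int_interval:
  "measure lebesgue (uminus ` E \<inter> {-b..-a}) = measure lebesgue (E \<inter> {a..b :: real})"
proof -
  have "uminus ` E \<inter> {-b..-a} = uminus ` (E \<inter> {a..b})"
    by (auto simp: image_Int)
  then show ?thesis by (simp add: measure_lebesgue_reflect)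
qed

lemma weakly_nowhere_dense_reflect:
  assumes "weakly_nowhere_dense E"
  shows "weakly_nowhere_dense (uminus ` E)"
  unfolding weakly_nowhere_dense_def
proof (intro allI impI)
  fix a b :: real
  assume "a < b"
  then have "measure lebesgue (E \<inter> {-b..-a}) \<noteq> -a - -b"
    using assms[unfolded weakly_nowhere_dense_def, rule_format, of "-b" "-a"] by simp
  then show "measure lebesgue (uminus ` E \<inter> {a..b}) \<noteq> measure lebesgue {a..b}"
    using \<open>a < b\<close> measure_reflect_Int_interval[of E "-a" "-b"] by simp
qed

lemma measure_reflect_Int_left_interval:
  "measure lebesgue (uminus ` E \<inter> {- x - s..- x}) = measure lebesgue (E \<inter> {x..x + s :: real})"
  using measure_reflect_Int_interval[of E "x + s" x] by simp

lemma right_density_point_iff_reflect: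
  "right_density_point E x \<longleftrightarrow> left_density_point (uminus ` E) (- x)"
  using measure_reflect_Int_left_interval[of UNIV]
  by (simp add: right_density_point_def left_density_point_def measure_reflect_Int_left_interval)

subsection \<open>A weak Lebesgue density theorem\<close>

lemma measure_Int_open_le_if_ball_density_le:
  fixes S G :: "'a::euclidean_space set"
  assumes S: "S \<in> sets lebesgue" and G: "open G" "G \<in> lmeasurable" and "0 \<le> \<theta>"
    and balls: "\<And>z r. 0 < r \<Longrightarrow> ball z r \<subseteq> G \<Longrightarrow>
      measure lebesgue (S \<inter> ball z r) \<le> \<theta> * measure lebesgue (ball z r)"
  shows "measure lebesgue (S \<inter> G) \<le> \<theta> * measure lebesgue G"
proof -
  define K where "K = {(z, r). 0 < r \<and> ball z r \<subseteq> G}"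
  define B where "B i = ball (fst i) (snd i)" for i :: "'a \<times> real"
  have fine: "\<exists>i. i \<in> K \<and> x \<in> B i \<and> snd i < d" if x: "x \<in> S \<inter> G" and "0 < d" for x d
  proof -
    obtain e where "0 < e" "ball x e \<subseteq> G"
      using G(1) x by (meson IntD2 open_contains_ball_eq)
    then have "(x, min e d / 2) \<in> K"
      using \<open>0 < d\<close> by (force simp: K_def)
    then show ?thesis
      using \<open>0 < e\<close> \<open>0 < d\<close> by (intro exI[of _ "(x, min e d / 2)"]) (auto simp: B_def)
  qed
  obtain C where C: "countable C" "C \<subseteq> K" and disj: "pairwise (\<lambda>i j. disjnt (B i) (B j)) C"
    and null: "negligible (S \<inter> G - (\<Union>i\<in>C. B i))"
    using Vitali_covering_theorem_balls[of "S \<inter> G" K fst snd] fine unfolding B_def by blast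
  have B_in_G: "B i \<subseteq> G" and B_dens: "emeasure lebesgue (S \<inter> B i) \<le> \<theta> * emeasure lebesgue (B i)"
    if "i \<in> C" for i
  proof -
    obtain z r where i: "i = (z, r)" "0 < r" "ball z r \<subseteq> G"
      using C(2) \<open>i \<in> C\<close> by (auto simp: K_def)
    then show "B i \<subseteq> G" by (simp add: B_def)
    have "S \<inter> ball z r \<in> lmeasurable"
      using fmeasurable_Int_fmeasurable[OF lmeasurable_ball S] by (simp add: Int_commute)
    then show "emeasure lebesgue (S \<inter> B i) \<le> \<theta> * emeasure lebesgue (B i)"
      using balls[OF i(2,3)] \<open>0 \<le> \<theta>\<close>
      by (simp add: B_def i emeasure_eq_measure2 ennreal_mult[symmetric])
  qed
  have B_sets: "B i \<in> sets lebesgue" for i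
    by (simp add: B_def)
  have disj_B: "disjoint_family_on B C"
    using disj by (auto simp: disjoint_family_on_def pairwise_def disjnt_def)
  then have disj_SB: "disjoint_family_on (\<lambda>i. S \<inter> B i) C"
    unfolding disjoint_family_on_def by blast
  have "(\<Union>i\<in>C. S \<inter> B i) \<in> sets lebesgue"
    using S C(1) by (intro sets.countable_UN'') (auto simp: B_sets)
  moreover have "S \<inter> G = (\<Union>i\<in>C. S \<inter> B i) \<union> (S \<inter> G - (\<Union>i\<in>C. B i))"
    using B_in_G by blast
  ultimately have "emeasure lebesgue (S \<inter> G) = emeasure lebesgue (\<Union>i\<in>C. S \<inter> B i)"
    using null by (metis emeasure_Un_null_set negligible_iff_null_sets)
  also have "\<dots> = (\<integral>\<^sup>+i. emeasure lebesgue (S \<inter> B i) \<partial>count_space C)"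
    using S C(1) disj_SB by (intro emeasure_UN_countable) (auto simp: B_sets)
  also have "\<dots> \<le> (\<integral>\<^sup>+i. \<theta> * emeasure lebesgue (B i) \<partial>count_space C)"
    using B_dens by (intro nn_integral_mono) auto
  also have "\<dots> = \<theta> * (\<integral>\<^sup>+i. emeasure lebesgue (B i) \<partial>count_space C)"
    by (rule nn_integral_cmult) auto
  also have "(\<integral>\<^sup>+i. emeasure lebesgue (B i) \<partial>count_space C) = emeasure lebesgue (\<Union>i\<in>C. B i)"
    using C(1) disj_B by (intro emeasure_UN_countable[symmetric]) (auto simp: B_sets)
  also have "emeasure lebesgue (\<Union>i\<in>C. B i) \<le> emeasure lebesgue G"
    using B_in_G G by (intro emeasure_mono) auto
  finally have "emeasure lebesgue (S \<inter> G) \<le> \<theta> * emeasure lebesgue G"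
    by (simp add: mult_left_mono)
  moreover have "S \<inter> G \<in> lmeasurable"
    using fmeasurable_Int_fmeasurable[OF G(2) S] by (simp add: Int_commute)
  ultimately show ?thesis
    using G \<open>0 \<le> \<theta>\<close> by (simp add: emeasure_eq_measure2 ennreal_mult[symmetric])
qed

lemma lmeasurable_Int_interval:
  fixes E :: "real set"
  assumes "E \<in> sets lebesgue"
  shows "E \<inter> {a..b} \<in> lmeasurable"
  using fmeasurable_Int_fmeasurable[OF lmeasurable_cbox assms, of a b] by (simp add: Int_commute)

lemma measure_Compl_Int_interval:
  fixes E :: "real set"
  assumes "E \<in> sets lebesgue" "a \<le> b"
  shows "measure lebesgue (- E \<inter> {a..b}) = (b - a) - measure lebesgue (E \<inter> {a..b})"
proof -
  have "measure lebesgue ({a..b} - E \<inter> {a..b}) = measure lebesgue {a..b} - measure lebesgue (E \<inter> {a..b})"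
    using assms(1) by (intro measurable_measure_Diff) auto
  moreover have "- E \<inter> {a..b} = {a..b} - E \<inter> {a..b}"
    by blast
  ultimately show ?thesis
    using assms(2) by simp
qed

lemma weakly_nowhere_dense_Compl_pos:
  fixes E :: "real set"
  assumes "E \<in> sets lebesgue" "weakly_nowhere_dense E" "a < b"
  shows "0 < measure lebesgue (- E \<inter> {a..b})"
proof -
  have "measure lebesgue (E \<inter> {a..b}) \<le> measure lebesgue {a..b}"
    using assms(1) by (intro measure_mono_fmeasurable) auto
  moreover have "measure lebesgue (E \<inter> {a..b}) \<noteq> measure lebesgue {a..b}"
    using assms(2,3) by (simp add: weakly_nowhere_dense_def)
  ultimately show ?thesis
    using assms by (simp add: measure_Compl_Int_interval)
qed

lemma measure_Int_open_le_if_interval_density_le: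
  fixes S G :: "real set"
  assumes S: "S \<in> sets lebesgue" and G: "open G" "G \<subseteq> {a..b}" and "0 \<le> \<theta>"
    and intervals: "\<And>c d. a \<le> c \<Longrightarrow> c < d \<Longrightarrow> d \<le> b \<Longrightarrow>
      measure lebesgue (S \<inter> {c..d}) \<le> \<theta> * (d - c)"
  shows "measure lebesgue (S \<inter> G) \<le> \<theta> * measure lebesgue G"
proof (rule measure_Int_open_le_if_ball_density_le[OF S G(1) _ \<open>0 \<le> \<theta>\<close>])
  show "G \<in> lmeasurable"
    using G by (intro lmeasurable_open bounded_subset[OF bounded_closed_interval])
  fix z r :: real
  assume "0 < r" "ball z r \<subseteq> G"
  then have "{z - r<..<z + r} \<subseteq> {a..b}"
    using G(2) by (simp add: ball_eq_greaterThanLessThan)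
  then have "a \<le> z - r" "z + r \<le> b"
    using \<open>0 < r\<close> by (simp_all add: greaterThanLessThan_subseteq_atLeastAtMost_iff)
  have "measure lebesgue (S \<inter> ball z r) \<le> measure lebesgue (S \<inter> {z - r..z + r})"
    using S lmeasurable_Int_interval[OF S, of "z - r" "z + r"]
    by (intro measure_mono_fmeasurable) (auto simp: ball_eq_greaterThanLessThan)
  also have "\<dots> \<le> \<theta> * measure lebesgue (ball z r)"
    using intervals[OF \<open>a \<le> z - r\<close> _ \<open>z + r \<le> b\<close>] \<open>0 < r\<close>
    by (simp add: ball_eq_greaterThanLessThan)
  finally show "measure lebesgue (S \<inter> ball z r) \<le> \<theta> * measure lebesgue (ball z r)" .
qed

lemma lmeasurable_outer_open_within:
  fixes S U :: "'a::euclidean_space set"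
  assumes S: "S \<in> lmeasurable" and "S \<subseteq> U" "open U" "0 < \<epsilon>"
  obtains G where "open G" "S \<subseteq> G" "G \<subseteq> U" "G \<in> lmeasurable"
    "measure lebesgue G < measure lebesgue S + \<epsilon>"
proof -
  obtain T where T: "open T" "S \<subseteq> T" "T - S \<in> lmeasurable" "emeasure lebesgue (T - S) < \<epsilon>"
    using sets_lebesgue_outer_open[OF fmeasurableD[OF S] \<open>0 < \<epsilon>\<close>] by blast
  define G where "G = T \<inter> U"
  have G: "open G" "S \<subseteq> G" "G \<subseteq> U" "G \<subseteq> S \<union> (T - S)"
    using T assms by (auto simp: G_def)
  have ST: "S \<union> (T - S) \<in> lmeasurable"
    using S T(3) by (rule fmeasurable.Un)
  have "G \<in> sets lebesgue"
    using lebesgue_openin[of UNIV G] \<open>open G\<close> by simp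
  with ST G(4) have "G \<in> lmeasurable"
    by (rule fmeasurableI2)
  have "measure lebesgue G \<le> measure lebesgue (S \<union> (T - S))"
    using G(4) \<open>G \<in> sets lebesgue\<close> ST by (rule measure_mono_fmeasurable)
  also have "\<dots> \<le> measure lebesgue S + measure lebesgue (T - S)"
    using S T(3) by (intro measure_Un_le fmeasurableD)
  also have "measure lebesgue (T - S) < \<epsilon>"
    using T(3,4) \<open>0 < \<epsilon>\<close> by (simp add: emeasure_eq_measure2 ennreal_less_iff)
  finally show ?thesis
    using that G(1-3) \<open>G \<in> lmeasurable\<close> by simp
qed

lemma exists_interval_density_gt:
  fixes S :: "real set"
  assumes S: "S \<in> sets lebesgue" and pos: "0 < measure lebesgue (S \<inter> {a..b})" and "\<theta> < 1"
  obtains c d where "a \<le> c" "c < d" "d \<le> b" "\<theta> * (d - c) < measure lebesgue (S \<inter> {c..d})"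
proof (rule ccontr)
  \<comment> \<open>otherwise, by Vitali, an open set barely larger than \<open>S \<inter> (a, b)\<close> would contain too
    little of \<open>S\<close>\<close>
  note interval = that
  assume "\<not> thesis"
  define \<theta>' where "\<theta>' = max 0 \<theta>"
  have "0 \<le> \<theta>'" "\<theta>' < 1"
    using \<open>\<theta> < 1\<close> by (auto simp: \<theta>'_def)
  have sparse: "measure lebesgue (S \<inter> {c..d}) \<le> \<theta>' * (d - c)"
    if "a \<le> c" "c < d" "d \<le> b" for c d
  proof -
    have "measure lebesgue (S \<inter> {c..d}) \<le> \<theta> * (d - c)"
      using interval[OF that] \<open>\<not> thesis\<close> by (meson not_less)
    also have "\<dots> \<le> \<theta>' * (d - c)"
      using \<open>c < d\<close> by (intro mult_right_mono) (auto simp: \<theta>'_def)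
    finally show ?thesis .
  qed
  define S' where "S' = S \<inter> {a<..<b}"
  define m where "m = measure lebesgue S'"
  have S': "S' \<in> lmeasurable"
    using fmeasurable_Int_fmeasurable[OF _ S, of "{a<..<b}"] by (simp add: S'_def Int_commute)
  have "measure lebesgue (S \<inter> {a..b}) = m"
    unfolding m_def S'_def
    by (rule measure_negligible_symdiff[OF S'[unfolded S'_def] negligible_subset[of "{a, b}"]]) auto
  with pos have "0 < m" by simp
  define \<epsilon> where "\<epsilon> = (1 - \<theta>') * m"
  have "0 < \<epsilon>"
    using \<open>0 < m\<close> \<open>\<theta>' < 1\<close> by (simp add: \<epsilon>_def)
  have "S' \<subseteq> {a<..<b}"
    by (simp add: S'_def)
  then obtain G where G: "open G" "S' \<subseteq> G" "G \<subseteq> {a<..<b}" "measure lebesgue G < m + \<epsilon>"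
    using lmeasurable_outer_open_within[OF S' _ open_greaterThanLessThan \<open>0 < \<epsilon>\<close>]
    unfolding m_def by metis
  then have "S \<inter> G = S'" "G \<subseteq> {a..b}"
    unfolding S'_def by auto
  then have "m \<le> \<theta>' * measure lebesgue G"
    using measure_Int_open_le_if_interval_density_le[OF S \<open>open G\<close> _ \<open>0 \<le> \<theta>'\<close> sparse]
    by (simp add: m_def)
  also have "\<dots> \<le> \<theta>' * (m + \<epsilon>)"
    using G(4) \<open>0 \<le> \<theta>'\<close> by (intro mult_left_mono) auto
  also have "\<dots> < m"
  proof -
    have "0 < (1 - \<theta>')\<^sup>2 * m"
      using \<open>0 < m\<close> \<open>\<theta>' < 1\<close> by simp
    then show ?thesis by (simp add: \<epsilon>_def power2_eq_square algebra_simps)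
  qed
  finally show False by simp
qed

subsection \<open>One-sided sparse points\<close>

definition left_sparse :: "real set \<Rightarrow> real \<Rightarrow> real set" where
  "left_sparse E \<eta> = {x. \<exists>s. 0 < s \<and> s < \<eta> \<and> measure lebesgue (E \<inter> {x - s..x}) < s / 2}"

definition right_sparse :: "real set \<Rightarrow> real \<Rightarrow> real set" where
  "right_sparse E \<eta> = {x. \<exists>s. 0 < s \<and> s < \<eta> \<and> measure lebesgue (E \<inter> {x..x + s}) < s / 2}"

lemma right_sparse_reflect: "right_sparse E \<eta> = uminus ` left_sparse (uminus ` E) \<eta>"
  unfolding minus_image_eq_vimage[of "left_sparse (uminus ` E) \<eta>"]
  by (auto simp: right_sparse_def left_sparse_def measure_reflect_Int_left_interval)

lemma measure_Int_interval_shift_le: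
  fixes E :: "real set"
  assumes "E \<in> sets lebesgue"
  shows "measure lebesgue (E \<inter> {p + h..q + h}) \<le> measure lebesgue (E \<inter> {p..q}) + 2 * \<bar>h\<bar>"
proof -
  define J where "J = {p - \<bar>h\<bar>..p} \<union> {q..q + \<bar>h\<bar>}"
  have J: "J \<in> lmeasurable"
    by (simp add: J_def fmeasurable.Un)
  have "measure lebesgue J \<le> measure lebesgue {p - \<bar>h\<bar>..p} + measure lebesgue {q..q + \<bar>h\<bar>}"
    unfolding J_def by (intro measure_Un_le) auto
  then have "measure lebesgue J \<le> 2 * \<bar>h\<bar>" by simp
  have E_pq: "E \<inter> {p..q} \<in> lmeasurable"
    using assms by (rule lmeasurable_Int_interval)
  have "E \<inter> {p + h..q + h} \<subseteq> E \<inter> {p..q} \<union> J"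
    by (auto simp: J_def)
  then have "measure lebesgue (E \<inter> {p + h..q + h}) \<le> measure lebesgue (E \<inter> {p..q} \<union> J)"
    using assms E_pq J by (intro measure_mono_fmeasurable) auto
  also have "\<dots> \<le> measure lebesgue (E \<inter> {p..q}) + measure lebesgue J"
    using E_pq J by (intro measure_Un_le) auto
  finally show ?thesis
    using \<open>measure lebesgue J \<le> 2 * \<bar>h\<bar>\<close> by simp
qed

lemma continuous_measure_Int_left_interval:
  fixes E :: "real set"
  assumes "E \<in> sets lebesgue"
  shows "continuous_on UNIV (\<lambda>x. measure lebesgue (E \<inter> {x - s..x}))"
proof (rule lipschitz_on_continuous_on[OF lipschitz_onI])
  fix x y :: real
  have "measure lebesgue (E \<inter> {(y - s) + (x - y)..y + (x - y)})
      \<le> measure lebesgue (E \<inter> {y - s..y}) + 2 * \<bar>x - y\<bar>"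
    and "measure lebesgue (E \<inter> {(x - s) + (y - x)..x + (y - x)})
      \<le> measure lebesgue (E \<inter> {x - s..x}) + 2 * \<bar>y - x\<bar>"
    using assms by (rule measure_Int_interval_shift_le)+
  then show "dist (measure lebesgue (E \<inter> {x - s..x})) (measure lebesgue (E \<inter> {y - s..y}))
      \<le> 2 * dist x y"
    by (simp add: dist_real_def abs_minus_commute)
qed simp

lemma open_left_sparse:
  assumes "E \<in> sets lebesgue"
  shows "open (left_sparse E \<eta>)"
proof -
  have "open (\<Union>s\<in>{0<..<\<eta>}. {x. measure lebesgue (E \<inter> {x - s..x}) < s / 2})"
    by (intro open_UN ballI open_Collect_less continuous_measure_Int_left_interval[OF assms]
        continuous_on_const)
  moreover have "left_sparse E \<eta> = (\<Union>s\<in>{0<..<\<eta>}. {x. measure lebesgue (E \<inter> {x - s..x}) < s / 2})"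
    by (auto simp: left_sparse_def)
  ultimately show ?thesis by simp
qed

lemma open_right_sparse:
  assumes "E \<in> sets lebesgue"
  shows "open (right_sparse E \<eta>)"
  unfolding right_sparse_reflect
  using open_left_sparse[OF sets_lebesgue_reflect[OF assms]] by (rule open_negations)

lemma exists_left_sparse_interval_after_gap:
  fixes E :: "real set"
  assumes E: "E \<in> sets lebesgue" and gap: "measure lebesgue (E \<inter> {c..d}) < (d - c) / 4"
    and "x0 \<in> E" "d \<le> x0"
  obtains y where "y \<in> E" "d \<le> y" "y < x0 + (d - c) / 4"
    "measure lebesgue (E \<inter> {c..y}) < (y - c) / 2"
proof -
  \<comment> \<open>\<open>y\<close> is almost the first point of \<open>E\<close> to the right of \<open>[c, d]\<close>,
    so \<open>[c, y]\<close> contains little more of \<open>E\<close> than \<open>[c, d]\<close> does\<close>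
  define A where "A = E \<inter> {d..}"
  have "c < d"
    using gap measure_nonneg[of lebesgue "E \<inter> {c..d}"] by argo
  have "x0 \<in> A" "bdd_below A"
    using \<open>x0 \<in> E\<close> \<open>d \<le> x0\<close> by (auto simp: A_def)
  then have "Inf A \<le> x0"
    by (rule cInf_lower)
  obtain y where "y \<in> A" "y < Inf A + (d - c) / 4"
    using cInf_lessD[of A "Inf A + (d - c) / 4"] \<open>x0 \<in> A\<close> \<open>c < d\<close> by auto
  have "Inf A \<le> y" "y \<in> E" "d \<le> y"
    using \<open>y \<in> A\<close> \<open>bdd_below A\<close> by (auto intro: cInf_lower simp: A_def)
  have "Inf A \<le> x" if "x \<in> E" "d \<le> x" for x
    using that \<open>bdd_below A\<close> by (intro cInf_lower) (auto simp: A_def)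
  then have "E \<inter> {c..y} \<subseteq> E \<inter> {c..d} \<union> {Inf A..y}"
    by force
  then have "measure lebesgue (E \<inter> {c..y}) \<le> measure lebesgue (E \<inter> {c..d} \<union> {Inf A..y})"
    using E lmeasurable_Int_interval[OF E] by (intro measure_mono_fmeasurable fmeasurable.Un) auto
  also have "\<dots> \<le> measure lebesgue (E \<inter> {c..d}) + measure lebesgue {Inf A..y}"
    using lmeasurable_Int_interval[OF E] by (intro measure_Un_le) auto
  also have "measure lebesgue {Inf A..y} = y - Inf A"
    using \<open>Inf A \<le> y\<close> by simp
  finally have "measure lebesgue (E \<inter> {c..y}) < (y - c) / 2"
    using gap \<open>y < Inf A + (d - c) / 4\<close> \<open>d \<le> y\<close> by argo
  moreover have "y < x0 + (d - c) / 4"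
    using \<open>y < Inf A + (d - c) / 4\<close> \<open>Inf A \<le> x0\<close> by argo
  ultimately show ?thesis
    using that \<open>y \<in> E\<close> \<open>d \<le> y\<close> by blast
qed

lemma exists_left_sparse_near:
  fixes E :: "real set"
  assumes E: "E \<in> sets lebesgue" "weakly_nowhere_dense E" and "x0 \<in> E" "0 < \<delta>"
  obtains y where "y \<in> E" "\<bar>y - x0\<bar> < \<delta>" "y \<in> left_sparse E \<delta>"
proof -
  have "- E \<in> sets lebesgue" "0 < measure lebesgue (- E \<inter> {x0 - \<delta> / 2..x0})"
    using E \<open>0 < \<delta>\<close> by (auto simp: Compl_in_sets_lebesgue intro: weakly_nowhere_dense_Compl_pos)
  then obtain c d where cd: "x0 - \<delta> / 2 \<le> c" "c < d" "d \<le> x0"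
    and "3 / 4 * (d - c) < measure lebesgue (- E \<inter> {c..d})"
    by (rule exists_interval_density_gt[where \<theta> = "3 / 4"]) auto
  then have "measure lebesgue (E \<inter> {c..d}) < (d - c) / 4"
    using measure_Compl_Int_interval[OF E(1), of c d] by simp
  then obtain y where y: "y \<in> E" "d \<le> y" "y < x0 + (d - c) / 4"
    and sparse: "measure lebesgue (E \<inter> {y - (y - c)..y}) < (y - c) / 2"
    using exists_left_sparse_interval_after_gap[OF E(1) _ \<open>x0 \<in> E\<close> \<open>d \<le> x0\<close>] by auto
  have "\<bar>y - x0\<bar> < \<delta>" "y - c < \<delta>"
    using cd y unfolding abs_less_iff by argo+
  moreover have "y \<in> left_sparse E \<delta>"
    using sparse \<open>y - c < \<delta>\<close> cd y unfolding left_sparse_def by (intro CollectI exI[of _ "y - c"]) auto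
  ultimately show ?thesis
    using that \<open>y \<in> E\<close> by blast
qed

lemma closure_Int_left_sparse:
  fixes E :: "real set"
  assumes "E \<in> sets lebesgue" "weakly_nowhere_dense E" "0 < \<eta>"
  shows "E \<subseteq> closure (E \<inter> left_sparse E \<eta>)"
proof
  fix x0 assume "x0 \<in> E"
  show "x0 \<in> closure (E \<inter> left_sparse E \<eta>)"
    unfolding closure_approachable
  proof (intro allI impI)
    fix e :: real assume "0 < e"
    then obtain y where "y \<in> E" "\<bar>y - x0\<bar> < min e \<eta>" "y \<in> left_sparse E (min e \<eta>)"
      using exists_left_sparse_near[OF assms(1,2) \<open>x0 \<in> E\<close>, of "min e \<eta>"] \<open>0 < \<eta>\<close> by auto
    moreover have "left_sparse E (min e \<eta>) \<subseteq> left_sparse E \<eta>"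
      by (auto simp: left_sparse_def)
    ultimately show "\<exists>y\<in>E \<inter> left_sparse E \<eta>. dist y x0 < e"
      by (auto simp: dist_real_def)
  qed
qed

lemma closure_Int_right_sparse:
  fixes E :: "real set"
  assumes "E \<in> sets lebesgue" "weakly_nowhere_dense E" "0 < \<eta>"
  shows "E \<subseteq> closure (E \<inter> right_sparse E \<eta>)"
proof -
  have "uminus ` E \<subseteq> closure (uminus ` E \<inter> left_sparse (uminus ` E) \<eta>)"
    using assms by (intro closure_Int_left_sparse sets_lebesgue_reflect weakly_nowhere_dense_reflect)
  then have "uminus ` uminus ` E \<subseteq> uminus ` closure (uminus ` E \<inter> left_sparse (uminus ` E) \<eta>)"
    by (rule image_mono)
  also have "\<dots> = closure (E \<inter> right_sparse E \<eta>)"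
    by (simp add: closure_injective_linear_image linear_uminus image_Int image_image right_sparse_reflect)
  finally show ?thesis by (simp add: image_image)
qed

lemma left_density_point_tendsto:
  assumes "left_density_point E x"
  shows "((\<lambda>s. measure lebesgue (E \<inter> {x - s..x}) / s) \<longlongrightarrow> 1) (at_right 0)"
proof (rule tendsto_at_right_sequentially[of 0 1])
  fix r :: "nat \<Rightarrow> real"
  assume r: "\<And>n. 0 < r n" "decseq r" "r \<longlonglongrightarrow> 0"
  then have "(\<lambda>n. measure lebesgue (E \<inter> {x - r n..x}) / measure lebesgue {x - r n..x}) \<longlonglongrightarrow> 1"
    using assms unfolding left_density_point_def by blast
  moreover have "measure lebesgue {x - r n..x} = r n" for n
    using r(1)[of n] by simp
  ultimately show "(\<lambda>n. measure lebesgue (E \<inter> {x - r n..x}) / r n) \<longlonglongrightarrow> 1"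
    by simp
qed simp

lemma not_left_density_point_if_sparse:
  assumes "\<And>n. x \<in> left_sparse E (inverse (Suc n))"
  shows "\<not> left_density_point E x"
proof
  assume "left_density_point E x"
  then have "\<forall>\<^sub>F s in at_right 0. 1 / 2 < measure lebesgue (E \<inter> {x - s..x}) / s"
    by (rule order_tendstoD(1)[OF left_density_point_tendsto]) simp
  then obtain b where "0 < b" and b: "\<And>s. 0 < s \<Longrightarrow> s < b \<Longrightarrow> 1 / 2 < measure lebesgue (E \<inter> {x - s..x}) / s"
    by (auto simp: eventually_at_right_field)
  obtain n where "inverse (Suc n) < b"
    using reals_Archimedean[OF \<open>0 < b\<close>] by auto
  then obtain s where "0 < s" "s < b" "measure lebesgue (E \<inter> {x - s..x}) < s / 2"
    using assms[of n] by (auto simp: left_sparse_def)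
  with b[of s] show False
    by (simp add: field_simps)
qed

lemma not_right_density_point_if_sparse:
  assumes "\<And>n. x \<in> right_sparse E (inverse (Suc n))"
  shows "\<not> right_density_point E x"
  unfolding right_density_point_iff_reflect
proof (rule not_left_density_point_if_sparse)
  show "- x \<in> left_sparse (uminus ` E) (inverse (Suc n))" for n
    using assms[of n] unfolding right_sparse_reflect by auto
qed

subsection \<open>Baire category\<close>

lemma sets_lebesgue_gdelta:
  fixes E :: "'a::euclidean_space set"
  assumes "gdelta_in euclidean E"
  shows "E \<in> sets lebesgue"
proof -
  obtain \<T> where "countable \<T>" "\<And>T. T \<in> \<T> \<Longrightarrow> open T" "\<Inter>\<T> = E"
    using assms by (auto simp: gdelta_in_alt intersection_of_def)
  then show ?thesis
    using sets.countable_INT''[of lebesgue \<T> "\<lambda>T. T"] by auto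
qed

lemma gdelta_Int_Inter_dense_open_nonempty:
  fixes E :: "'a::{real_normed_vector,heine_borel} set"
  assumes "gdelta_in euclidean E" "E \<noteq> {}" "countable \<U>"
    and open_dense: "\<And>U. U \<in> \<U> \<Longrightarrow> open U \<and> E \<subseteq> closure (E \<inter> U)"
  shows "E \<inter> \<Inter>\<U> \<noteq> {}"
proof -
  obtain \<T> where \<T>: "countable \<T>" "\<And>T. T \<in> \<T> \<Longrightarrow> open T" "\<Inter>\<T> = E"
    using assms(1) by (auto simp: gdelta_in_alt intersection_of_def)
  have all_open_dense: "open U \<and> E \<subseteq> closure (E \<inter> U)" if "U \<in> \<T> \<union> \<U>" for U
    using that open_dense \<T> closure_subset by blast
  have "openin (top_of_set (closure E)) (closure E \<inter> U) \<and> closure E \<subseteq> closure (closure E \<inter> U)"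
    if "U \<in> \<T> \<union> \<U>" for U
  proof -
    have "closure E \<subseteq> closure (E \<inter> U)"
      using all_open_dense[OF that] by (meson closed_closure closure_minimal)
    also have "\<dots> \<subseteq> closure (closure E \<inter> U)"
      by (intro closure_mono Int_mono closure_subset order_refl)
    finally show ?thesis
      using all_open_dense[OF that] by (auto intro: openin_open_Int)
  qed
  then have "closure E \<subseteq> closure (\<Inter>((\<lambda>U. closure E \<inter> U) ` (\<T> \<union> \<U>)))"
    using \<T>(1) \<open>countable \<U>\<close> by (intro Baire) auto
  then obtain x where "x \<in> \<Inter>((\<lambda>U. closure E \<inter> U) ` (\<T> \<union> \<U>))"
    using \<open>E \<noteq> {}\<close> closure_subset by fastforce
  then have "x \<in> \<Inter>\<T>" "x \<in> \<Inter>\<U>"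
    by blast+
  then show ?thesis
    using \<T>(3) by blast
qed

theorem corollary3p5:
  fixes E :: "real set"
  assumes "E \<noteq> {}"
    and "weakly_nowhere_dense E"
    and "gdelta_in euclidean E"
  shows "\<exists>x\<in>E. \<not> left_density_point E x \<and> \<not> right_density_point E x"
proof -
  have E: "E \<in> sets lebesgue"
    using assms(3) by (rule sets_lebesgue_gdelta)
  define \<U> where "\<U> = range (\<lambda>n. left_sparse E (inverse (Suc n)))
    \<union> range (\<lambda>n. right_sparse E (inverse (Suc n)))"
  have "E \<inter> \<Inter>\<U> \<noteq> {}"
  proof (rule gdelta_Int_Inter_dense_open_nonempty[OF assms(3,1)])
    show "countable \<U>"
      by (simp add: \<U>_def)
    fix U assume "U \<in> \<U>"
    then obtain n where "U = left_sparse E (inverse (Suc n)) \<or> U = right_sparse E (inverse (Suc n))"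
      unfolding \<U>_def by blast
    then show "open U \<and> E \<subseteq> closure (E \<inter> U)"
      by (elim disjE) (simp_all add: E assms(2) open_left_sparse open_right_sparse
          closure_Int_left_sparse closure_Int_right_sparse)
  qed
  then obtain x where "x \<in> E"
    "\<And>n. x \<in> left_sparse E (inverse (Suc n))" "\<And>n. x \<in> right_sparse E (inverse (Suc n))"
    unfolding \<U>_def by blast
  then show ?thesis
    using not_left_density_point_if_sparse not_right_density_point_if_sparse by blast
qed

end
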